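(* Let $V$ be a matrix-valued function of $y$, $z$, and $\varepsilon$ that, together with its first-order derivatives, is smooth and $\mathcal{O}(1)$ as $\varepsilon \downarrow 0$. If $z = \psi_{(q)}(y,\varepsilon)$ and \[ V(\cdot\,,\psi_{(q)},\varepsilon) = \sum_{\ell=0}^q \varepsilon^\ell V_\ell + \mathcal{O}(\varepsilon^{q+1}), \qquad g_1(\cdot\,,\psi_{(q)},\varepsilon) = \sum_{\ell=0}^q \varepsilon^\ell g_{1,\ell} + \mathcal{O}(\varepsilon^{q+1}), \] then \[ \frac{dV}{dt}(\cdot\,,\psi_{(q)},\varepsilon) = \sum_{i=0}^q \varepsilon^{i+1} \sum_{\ell=0}^i \frac{dV_\ell}{dy}\, g_{1,i-\ell} + \mathcal{O}(\varepsilon^{q+1}). \]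
   Context: Consider the fast–slow system $y' = \varepsilon g_1(y,z,\varepsilon)$, $z' = g_2(y,z,\varepsilon)$ with $y \in \mathbf{R}^m$ slow and $z \in \mathbf{R}^n$ fast, possessing a slow manifold $\mathcal{M}_\varepsilon = \{z = h_\varepsilon(y)\}$ satisfying the invariance equation $g_2(y,h_\varepsilon,\varepsilon) = \varepsilon Dh_\varepsilon(y)\, g_1(y,h_\varepsilon,\varepsilon)$, with $h_\varepsilon$ smooth ($C^r$ for every finite $r$) in $y$ and $\varepsilon$. Here $z = \psi_{(q)}(y,\varepsilon)$ is a function approximating the slow manifold up to and including $\mathcal{O}(\varepsilon^q)$, i.e. $\psi_{(q)} = h_\varepsilon + \mathcal{O}(\varepsilon^{q+1})$ and $D\psi_{(q)} = Dh_\varepsilon + \mathcal{O}(\varepsilon^{q+1})$ (e.g. the CSP manifold of order $q$). The time derivative is $dV/dt = (DV)g = \varepsilon (D_y V) g_1 + (D_z V) g_2$, and $dV_\ell/dy$ denotes the total derivative with respect to $y$. *)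

theory Defs
  imports "HOL-Analysis.Analysis" "HOL-Library.Landau_Symbols"
begin

fun dd :: "'a::real_normed_vector list \<Rightarrow> ('a \<Rightarrow> 'b::real_normed_vector) \<Rightarrow> 'a \<Rightarrow> 'b" where
  "dd [] f = f"
| "dd (v # vs) f = (\<lambda>x. frechet_derivative (dd vs f) (at x) v)"

definition smooth_on :: "'a::real_normed_vector set \<Rightarrow> ('a \<Rightarrow> 'b::real_normed_vector) \<Rightarrow> bool" where
  "smooth_on S f \<longleftrightarrow> open S \<and> (\<forall>vs. \<forall>x\<in>S. dd vs f differentiable (at x))"

text \<open>Time derivative along the fast-slow vector field:
  dV/dt = eps (D_y V) g1 + (D_z V) g2, evaluated at (y,z,eps).\<close>
definition ddt ::
  "('m::real_normed_vector \<Rightarrow> 'n::real_normed_vector \<Rightarrow> real \<Rightarrow> 'v::real_normed_vector)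
   \<Rightarrow> ('m \<Rightarrow> 'n \<Rightarrow> real \<Rightarrow> 'm) \<Rightarrow> ('m \<Rightarrow> 'n \<Rightarrow> real \<Rightarrow> 'n)
   \<Rightarrow> 'm \<Rightarrow> 'n \<Rightarrow> real \<Rightarrow> 'v" where
  "ddt V g1 g2 y z eps =
     eps *\<^sub>R frechet_derivative (\<lambda>y'. V y' z eps) (at y) (g1 y z eps)
     + frechet_derivative (\<lambda>z'. V y z' eps) (at z) (g2 y z eps)"

end

theory Submission
  imports Defs
begin

text \<open>
  Let W(y, eps) = V(y, h_eps(y), eps) be V restricted to the slow manifold. By the chain rule and the
  invariance equation g2 = eps Dh g1, the fast part of dV/dt is absorbed there:
  dV/dt(y, h_eps(y), eps) = eps D_yW(y, eps) g1(y, h_eps(y), eps).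
  Since V, g1 and dV/dt are locally Lipschitz and psi = h_eps + O(eps^(q+1)), replacing h_eps by psi
  changes each of them only by O(eps^(q+1)); in particular W has the expansion sum eps^l V_l.
  By Taylor's theorem in eps and uniqueness of asymptotic expansions, V_l = d_eps^l W(., 0) / l!, so the
  V_l are smooth and, the mixed partial derivatives being symmetric, D_yW(y, eps) has the expansion
  sum eps^l dV_l/dy. Multiplying this by the expansion of g1 and truncating gives the claim.
\<close>

section \<open>Finite-order smoothness\<close>

lemmas has_frechet_derivative = frechet_derivative_works[THEN iffD1]

lemma dd_append: "dd (vs @ ws) f = dd vs (dd ws f)"
  by (induction vs) auto

text \<open>\<open>smooth_upto n S f\<close>: all derivatives of order at most \<open>n + 1\<close> exist on \<open>S\<close>.\<close>

definition smooth_upto :: "nat \<Rightarrow> 'a::real_normed_vector set \<Rightarrow> ('a \<Rightarrow> 'b::real_normed_vector) \<Rightarrow> bool" where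
  "smooth_upto n S f \<longleftrightarrow> (\<forall>vs. length vs \<le> n \<longrightarrow> (\<forall>x\<in>S. dd vs f differentiable (at x)))"

lemma smooth_on_iff_smooth_upto: "smooth_on S f \<longleftrightarrow> open S \<and> (\<forall>n. smooth_upto n S f)"
  unfolding smooth_on_def smooth_upto_def by auto

lemma smooth_on_differentiable: "smooth_on S f \<Longrightarrow> x \<in> S \<Longrightarrow> f differentiable (at x)"
  unfolding smooth_on_def by (metis dd.simps(1))

lemma smooth_upto_0: "smooth_upto 0 S f \<longleftrightarrow> (\<forall>x\<in>S. f differentiable (at x))"
  unfolding smooth_upto_def by auto

lemma smooth_upto_Suc:
  "smooth_upto (Suc n) S f \<longleftrightarrow>
     (\<forall>x\<in>S. f differentiable (at x)) \<and> (\<forall>v. smooth_upto n S (\<lambda>x. frechet_derivative f (at x) v))"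
  (is "?lhs \<longleftrightarrow> ?rhs")
proof
  assume ?lhs
  then show ?rhs
  proof (intro conjI ballI allI)
    show "f differentiable at x" if "x \<in> S" for x
      using \<open>?lhs\<close> that unfolding smooth_upto_def by (metis dd.simps(1) le0 list.size(3))
    show "smooth_upto n S (\<lambda>x. frechet_derivative f (at x) v)" for v
      unfolding smooth_upto_def
    proof (intro allI impI)
      fix vs :: "'a list" assume "length vs \<le> n"
      then have "\<forall>x\<in>S. dd (vs @ [v]) f differentiable at x"
        using \<open>?lhs\<close> unfolding smooth_upto_def by simp
      then show "\<forall>x\<in>S. dd vs (\<lambda>x. frechet_derivative f (at x) v) differentiable at x"
        by (simp add: dd_append)
    qed
  qed
next
  assume ?rhs
  show ?lhs unfolding smooth_upto_def
  proof (intro allI impI)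
    fix vs :: "'a list" assume "length vs \<le> Suc n"
    then show "\<forall>x\<in>S. dd vs f differentiable at x"
      using \<open>?rhs\<close> by (cases vs rule: rev_cases) (auto simp: smooth_upto_def dd_append)
  qed
qed

lemma smooth_upto_mono: "smooth_upto n S f \<Longrightarrow> m \<le> n \<Longrightarrow> smooth_upto m S f"
  unfolding smooth_upto_def by auto

lemma smooth_upto_differentiable: "smooth_upto n S f \<Longrightarrow> x \<in> S \<Longrightarrow> f differentiable (at x)"
  using smooth_upto_mono[of n S f 0] by (simp add: smooth_upto_0)

lemma smooth_upto_dd: "smooth_upto (n + length vs) S f \<Longrightarrow> smooth_upto n S (dd vs f)"
  unfolding smooth_upto_def by (auto simp: dd_append[symmetric])

lemma smooth_upto_transform_within_open:
  assumes "smooth_upto n S f" "open S" "\<And>x. x \<in> S \<Longrightarrow> f x = g x"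
  shows "smooth_upto n S g"
  using assms(1,3)
proof (induction n arbitrary: f g)
  case 0
  then show ?case
    using assms(2) by (metis differentiable_def has_derivative_transform_within_open smooth_upto_0)
next
  case (Suc n)
  have df: "f differentiable at x" if "x \<in> S" for x
    using Suc.prems(1) that by (simp add: smooth_upto_Suc)
  have "g differentiable at x" if "x \<in> S" for x
    using df[OF that] Suc.prems(2) assms(2) that
    by (metis differentiable_def has_derivative_transform_within_open)
  moreover have "smooth_upto n S (\<lambda>x. frechet_derivative g (at x) v)" for v
  proof (rule Suc.IH)
    show "smooth_upto n S (\<lambda>x. frechet_derivative f (at x) v)"
      using Suc.prems(1) by (simp add: smooth_upto_Suc)
    show "frechet_derivative f (at x) v = frechet_derivative g (at x) v" if "x \<in> S" for x
      using frechet_derivative_transform_within_open[OF df[OF that] assms(2) that] Suc.prems(2)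
      by simp
  qed
  ultimately show ?case by (simp add: smooth_upto_Suc)
qed

lemma smooth_upto_SucI:
  assumes "open S" "\<And>x. x \<in> S \<Longrightarrow> (f has_derivative f' x) (at x)"
    and "\<And>v. smooth_upto n S (\<lambda>x. f' x v)"
  shows "smooth_upto (Suc n) S f"
  unfolding smooth_upto_Suc
proof (intro conjI ballI allI)
  show "f differentiable at x" if "x \<in> S" for x
    using assms(2)[OF that] by (auto simp: differentiable_def)
  show "smooth_upto n S (\<lambda>x. frechet_derivative f (at x) v)" for v
    using assms(3)[of v] assms(1)
    by (rule smooth_upto_transform_within_open) (simp add: frechet_derivative_at[OF assms(2)])
qed

lemma smooth_upto_const: "smooth_upto n S (\<lambda>x. c)"
  unfolding smooth_upto_def
proof (intro allI impI ballI)
  fix vs :: "'a list" and x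
  have "dd vs (\<lambda>x. c) = (\<lambda>x. if vs = [] then c else 0)"
    by (induction vs) auto
  then show "dd vs (\<lambda>x. c) differentiable at x" by simp
qed

lemma smooth_upto_bounded_linear:
  assumes "open S" "bounded_linear L"
  shows "smooth_upto n S L"
proof (cases n)
  case 0
  then show ?thesis
    using assms(2) by (simp add: smooth_upto_0 bounded_linear_imp_differentiable)
next
  case (Suc m)
  show ?thesis unfolding Suc
    by (rule smooth_upto_SucI[OF assms(1) bounded_linear_imp_has_derivative[OF assms(2)]])
      (rule smooth_upto_const)
qed

lemma smooth_upto_add:
  assumes "open S"
  shows "smooth_upto n S f \<Longrightarrow> smooth_upto n S g \<Longrightarrow> smooth_upto n S (\<lambda>x. f x + g x)"
proof (induction n arbitrary: f g)
  case 0
  then show ?case by (auto simp: smooth_upto_0)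
next
  case (Suc n)
  show ?case
  proof (rule smooth_upto_SucI[OF assms])
    show "((\<lambda>x. f x + g x) has_derivative
        (\<lambda>v. frechet_derivative f (at x) v + frechet_derivative g (at x) v)) (at x)" if "x \<in> S" for x
      using Suc.prems that
      by (intro has_derivative_add has_frechet_derivative) (auto simp: smooth_upto_Suc)
    show "smooth_upto n S (\<lambda>x. frechet_derivative f (at x) v + frechet_derivative g (at x) v)" for v
      using Suc.prems by (intro Suc.IH) (auto simp: smooth_upto_Suc)
  qed
qed

lemma smooth_upto_sum:
  assumes "open S"
  shows "(\<And>i. i \<in> I \<Longrightarrow> smooth_upto n S (f i)) \<Longrightarrow> smooth_upto n S (\<lambda>x. \<Sum>i\<in>I. f i x)"
proof (induction I rule: infinite_finite_induct)
  case (insert i I)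
  then show ?case by (simp add: smooth_upto_add[OF assms])
qed (simp_all add: smooth_upto_const)

lemma smooth_upto_scaleR:
  assumes "open S"
  shows "smooth_upto n S a \<Longrightarrow> smooth_upto n S u \<Longrightarrow> smooth_upto n S (\<lambda>x. a x *\<^sub>R u x)"
proof (induction n arbitrary: a u)
  case 0
  then show ?case by (auto simp: smooth_upto_0)
next
  case (Suc n)
  have "smooth_upto n S a" "smooth_upto n S u"
    using Suc.prems smooth_upto_mono le_SucI by blast+
  show ?case
  proof (rule smooth_upto_SucI[OF assms])
    show "((\<lambda>x. a x *\<^sub>R u x) has_derivative
        (\<lambda>v. a x *\<^sub>R frechet_derivative u (at x) v + frechet_derivative a (at x) v *\<^sub>R u x)) (at x)"
      if "x \<in> S" for x
      using Suc.prems that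
      by (intro has_derivative_scaleR has_frechet_derivative) (auto simp: smooth_upto_Suc)
    show "smooth_upto n S
        (\<lambda>x. a x *\<^sub>R frechet_derivative u (at x) v + frechet_derivative a (at x) v *\<^sub>R u x)" for v
      using Suc.prems \<open>smooth_upto n S a\<close> \<open>smooth_upto n S u\<close>
      by (intro smooth_upto_add[OF assms] Suc.IH) (auto simp: smooth_upto_Suc)
  qed
qed

lemma smooth_upto_bounded_linear_compose:
  assumes "open S" "bounded_linear L"
  shows "smooth_upto n S f \<Longrightarrow> smooth_upto n S (\<lambda>x. L (f x))"
proof (induction n arbitrary: f)
  case 0
  then show ?case
    using bounded_linear.has_derivative[OF assms(2)] unfolding smooth_upto_0 differentiable_def
    by blast
next
  case (Suc n)
  show ?case
  proof (rule smooth_upto_SucI[OF assms(1)])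
    show "((\<lambda>x. L (f x)) has_derivative (\<lambda>v. L (frechet_derivative f (at x) v))) (at x)"
      if "x \<in> S" for x
      using Suc.prems that
      by (intro bounded_linear.has_derivative[OF assms(2)] has_frechet_derivative)
        (auto simp: smooth_upto_Suc)
    show "smooth_upto n S (\<lambda>x. L (frechet_derivative f (at x) v))" for v
      using Suc.prems by (intro Suc.IH) (auto simp: smooth_upto_Suc)
  qed
qed

lemma smooth_upto_Pair:
  assumes "open S"
  shows "smooth_upto n S f \<Longrightarrow> smooth_upto n S g \<Longrightarrow> smooth_upto n S (\<lambda>x. (f x, g x))"
proof (induction n arbitrary: f g)
  case 0
  then show ?case by (auto simp: smooth_upto_0 differentiable_Pair)
next
  case (Suc n)
  show ?case
  proof (rule smooth_upto_SucI[OF assms])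
    show "((\<lambda>x. (f x, g x)) has_derivative
        (\<lambda>v. (frechet_derivative f (at x) v, frechet_derivative g (at x) v))) (at x)" if "x \<in> S" for x
      using Suc.prems that
      by (intro has_derivative_Pair has_frechet_derivative) (auto simp: smooth_upto_Suc)
    show "smooth_upto n S (\<lambda>x. (frechet_derivative f (at x) v, frechet_derivative g (at x) v))" for v
      using Suc.prems by (intro Suc.IH) (auto simp: smooth_upto_Suc)
  qed
qed

lemma linear_Basis_expansion:
  fixes f :: "'a::euclidean_space \<Rightarrow> 'b::real_normed_vector"
  assumes "linear f"
  shows "f v = (\<Sum>b\<in>Basis. (v \<bullet> b) *\<^sub>R f b)"
proof -
  interpret linear f by fact
  have "f v = f (\<Sum>b\<in>Basis. (v \<bullet> b) *\<^sub>R b)"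
    by (simp add: euclidean_representation)
  also have "\<dots> = (\<Sum>b\<in>Basis. (v \<bullet> b) *\<^sub>R f b)"
    by (simp add: sum scale)
  finally show ?thesis .
qed

lemma frechet_derivative_Basis_expansion:
  fixes f :: "'a::euclidean_space \<Rightarrow> 'b::real_normed_vector"
  assumes "f differentiable at x"
  shows "frechet_derivative f (at x) w = (\<Sum>b\<in>Basis. (w \<bullet> b) *\<^sub>R frechet_derivative f (at x) b)"
  using linear_Basis_expansion[OF linear_frechet_derivative[OF assms]] .

lemma smooth_upto_compose:
  fixes f :: "'a::real_normed_vector \<Rightarrow> 'b::euclidean_space" and g :: "'b \<Rightarrow> 'c::real_normed_vector"
  assumes "open S" "f ` S \<subseteq> T"
  shows "smooth_upto n T g \<Longrightarrow> smooth_upto n S f \<Longrightarrow> smooth_upto n S (\<lambda>x. g (f x))"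
proof (induction n arbitrary: g)
  case 0
  then show ?case
    using assms(2) differentiable_chain_at[of f _ g] by (auto simp: smooth_upto_0 o_def)
next
  case (Suc n)
  have Dg: "smooth_upto n T (\<lambda>y. frechet_derivative g (at y) b)" for b
    using Suc.prems(1) by (simp add: smooth_upto_Suc)
  have Df: "smooth_upto n S (\<lambda>x. frechet_derivative f (at x) v \<bullet> b)" for v b
    using Suc.prems(2) unfolding smooth_upto_Suc
    by (intro smooth_upto_bounded_linear_compose[OF assms(1) bounded_linear_inner_left, of n
          "\<lambda>x. frechet_derivative f (at x) v"]) blast
  show ?case
  proof (rule smooth_upto_SucI[OF assms(1)])
    fix x assume "x \<in> S"
    then have "f differentiable at x" "g differentiable at (f x)"
      using Suc.prems assms(2) by (auto simp: smooth_upto_Suc)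
    then show "((\<lambda>x. g (f x)) has_derivative (\<lambda>v. \<Sum>b\<in>Basis.
        (frechet_derivative f (at x) v \<bullet> b) *\<^sub>R frechet_derivative g (at (f x)) b)) (at x)"
      using diff_chain_at[OF has_frechet_derivative has_frechet_derivative]
      by (simp add: o_def frechet_derivative_Basis_expansion[symmetric])
  next
    show "smooth_upto n S (\<lambda>x. \<Sum>b\<in>Basis.
        (frechet_derivative f (at x) v \<bullet> b) *\<^sub>R frechet_derivative g (at (f x)) b)" for v
      using Dg Df smooth_upto_mono[OF Suc.prems(2) le_SucI[OF order_refl]]
      by (intro smooth_upto_sum[OF assms(1)] smooth_upto_scaleR[OF assms(1)] Suc.IH)
  qed
qed

lemma smooth_upto_frechet_derivative:
  fixes F :: "'a::euclidean_space \<Rightarrow> 'b::real_normed_vector"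
  assumes "open S" "smooth_upto (Suc n) S F"
  shows "smooth_upto n (S \<times> UNIV) (\<lambda>(x, w). frechet_derivative F (at x) w)"
proof (rule smooth_upto_transform_within_open)
  have S: "open (S \<times> (UNIV :: 'a set))"
    using assms(1) by (simp add: open_Times)
  then show "open (S \<times> (UNIV :: 'a set))" .
  have "smooth_upto n (S \<times> UNIV) (\<lambda>xw::'a \<times> 'a. frechet_derivative F (at (fst xw)) b)" for b
  proof (rule smooth_upto_compose[OF S, of fst S])
    show "smooth_upto n S (\<lambda>x. frechet_derivative F (at x) b)"
      using assms(2) unfolding smooth_upto_Suc by blast
  qed (auto intro: smooth_upto_bounded_linear[OF S bounded_linear_fst])
  moreover have "smooth_upto n (S \<times> UNIV) (\<lambda>xw::'a \<times> 'a. snd xw \<bullet> b)" for b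
    by (intro smooth_upto_bounded_linear[OF S] bounded_linear_compose[OF bounded_linear_inner_left]
        bounded_linear_snd)
  ultimately show "smooth_upto n (S \<times> UNIV)
      (\<lambda>xw. \<Sum>b\<in>Basis. (snd xw \<bullet> b) *\<^sub>R frechet_derivative F (at (fst xw)) b)"
    by (intro smooth_upto_sum[OF S] smooth_upto_scaleR[OF S])
  show "(\<Sum>b\<in>Basis. (snd xw \<bullet> b) *\<^sub>R frechet_derivative F (at (fst xw)) b)
      = (case xw of (x, w) \<Rightarrow> frechet_derivative F (at x) w)" if "xw \<in> S \<times> UNIV" for xw
    using that smooth_upto_differentiable[OF assms(2)]
    by (auto simp: frechet_derivative_Basis_expansion[symmetric])
qed

section \<open>Symmetry of second derivatives\<close>

lemma has_derivative_along_line: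
  assumes "G differentiable at (p + s *\<^sub>R c)"
  shows "((\<lambda>s. G (p + s *\<^sub>R c)) has_derivative
      (\<lambda>h. h *\<^sub>R frechet_derivative G (at (p + s *\<^sub>R c)) c)) (at s)"
proof -
  have "((\<lambda>s. p + s *\<^sub>R c) has_derivative (\<lambda>h. h *\<^sub>R c)) (at s)"
    by (auto intro!: derivative_eq_intros)
  from diff_chain_at[OF this has_frechet_derivative[OF assms]]
  show ?thesis
    using linear_frechet_derivative[OF assms] by (simp add: o_def linear_scale)
qed

lemma mvt_norm_bound:
  fixes k :: "real \<Rightarrow> 'b::real_inner"
  assumes "0 < t"
    and "\<And>s. s \<in> {0..t} \<Longrightarrow> (k has_derivative (\<lambda>h. h *\<^sub>R k' s)) (at s)"
    and "\<And>s. s \<in> {0<..<t} \<Longrightarrow> norm (k' s) \<le> B"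
  shows "norm (k t - k 0) \<le> t * B"
proof -
  have "continuous_on {0..t} k"
    using assms(2) by (meson continuous_at_imp_continuous_on has_derivative_continuous)
  then obtain s where s: "s \<in> {0<..<t}" and bound: "norm (k t - k 0) \<le> norm ((t - 0) *\<^sub>R k' s)"
    using mvt_general[OF assms(1), of k "\<lambda>s h. h *\<^sub>R k' s"] assms(2) by auto
  note bound
  also have "\<dots> \<le> t * B"
    using assms(1) assms(3)[OF s] by (simp add: mult_left_mono)
  finally show ?thesis .
qed

lemma line_increment_bound:
  fixes G :: "'a::real_normed_vector \<Rightarrow> 'b::real_inner"
  assumes "0 < t"
    and "\<And>s. s \<in> {0..t} \<Longrightarrow> G differentiable at (p + s *\<^sub>R c)"
    and "\<And>s. s \<in> {0..t} \<Longrightarrow> norm (frechet_derivative G (at (p + s *\<^sub>R c)) c - M) \<le> e"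
  shows "norm (G (p + t *\<^sub>R c) - G p - t *\<^sub>R M) \<le> t * e"
proof -
  have "norm ((G (p + t *\<^sub>R c) - t *\<^sub>R M) - (G (p + 0 *\<^sub>R c) - 0 *\<^sub>R M)) \<le> t * e"
  proof (rule mvt_norm_bound[OF assms(1)])
    show "((\<lambda>s. G (p + s *\<^sub>R c) - s *\<^sub>R M) has_derivative
        (\<lambda>h. h *\<^sub>R (frechet_derivative G (at (p + s *\<^sub>R c)) c - M))) (at s)" if "s \<in> {0..t}" for s
      unfolding scaleR_diff_right
      by (intro has_derivative_diff has_derivative_along_line assms(2)[OF that]
          has_derivative_scaleR_left[OF has_derivative_ident])
  qed (use assms(3) in auto)
  then show ?thesis
    by (simp add: algebra_simps)
qed

lemma second_difference_bound:
  fixes F :: "'a::real_normed_vector \<Rightarrow> 'b::real_inner"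
  assumes t: "0 < t"
    and square: "\<And>s s'. s \<in> {0..t} \<Longrightarrow> s' \<in> {0..t} \<Longrightarrow> x + s *\<^sub>R a + s' *\<^sub>R b \<in> B"
    and DF: "\<And>y. y \<in> B \<Longrightarrow> F differentiable at y" "\<And>y. y \<in> B \<Longrightarrow> dd [a] F differentiable at y"
    and M: "\<And>y. y \<in> B \<Longrightarrow> norm (dd [b, a] F y - M) \<le> e"
  shows "norm (F (x + t *\<^sub>R a + t *\<^sub>R b) - F (x + t *\<^sub>R a) - F (x + t *\<^sub>R b) + F x
           - (t * t) *\<^sub>R M) \<le> e * (t * t)"
proof -
  have inner: "norm (dd [a] F (x + s *\<^sub>R a + t *\<^sub>R b) - dd [a] F (x + s *\<^sub>R a) - t *\<^sub>R M) \<le> t * e"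
    if s: "s \<in> {0..t}" for s
  proof (rule line_increment_bound[OF t])
    fix s' assume "s' \<in> {0..t}"
    then have "x + s *\<^sub>R a + s' *\<^sub>R b \<in> B"
      using square s by blast
    then show "dd [a] F differentiable at (x + s *\<^sub>R a + s' *\<^sub>R b)"
      and "norm (frechet_derivative (dd [a] F) (at (x + s *\<^sub>R a + s' *\<^sub>R b)) b - M) \<le> e"
      using DF M by auto
  qed
  define G where "G y = F (y + t *\<^sub>R b) - F y" for y
  have "norm (G (x + t *\<^sub>R a) - G x - t *\<^sub>R (t *\<^sub>R M)) \<le> t * (t * e)"
  proof (rule line_increment_bound[OF t])
    fix s assume s: "s \<in> {0..t}"
    then have "x + s *\<^sub>R a + t *\<^sub>R b \<in> B" "x + s *\<^sub>R a \<in> B"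
      using square[of s t] square[of s 0] t by auto
    then have "((\<lambda>y. F (y + t *\<^sub>R b)) has_derivative frechet_derivative F (at (x + s *\<^sub>R a + t *\<^sub>R b)))
        (at (x + s *\<^sub>R a))" "F differentiable at (x + s *\<^sub>R a)"
      using diff_chain_at[OF has_derivative_add_const[OF has_derivative_ident]
          has_frechet_derivative[OF DF(1)]]
      by (auto simp: o_def DF(1))
    then have "(G has_derivative (\<lambda>h. frechet_derivative F (at (x + s *\<^sub>R a + t *\<^sub>R b)) h
        - frechet_derivative F (at (x + s *\<^sub>R a)) h)) (at (x + s *\<^sub>R a))"
      unfolding G_def by (intro has_derivative_diff has_frechet_derivative)
    then show "G differentiable at (x + s *\<^sub>R a)"
      and "norm (frechet_derivative G (at (x + s *\<^sub>R a)) a - t *\<^sub>R M) \<le> t * e"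
      using inner[OF s] by (auto simp: differentiable_def frechet_derivative_at[symmetric])
  qed
  then show ?thesis
    by (simp add: G_def algebra_simps)
qed

lemma second_difference_approx:
  fixes F :: "'a::real_normed_vector \<Rightarrow> 'b::real_inner"
  assumes "open S" "smooth_upto 2 S F" "x \<in> S" "e > 0"
  obtains d where "d > 0" "\<And>t. 0 < t \<Longrightarrow> t < d \<Longrightarrow>
    norm (F (x + t *\<^sub>R a + t *\<^sub>R b) - F (x + t *\<^sub>R a) - F (x + t *\<^sub>R b) + F x
          - (t * t) *\<^sub>R dd [b, a] F x) \<le> e * (t * t)"
proof -
  have "smooth_upto (1 + length [a]) S F" "smooth_upto (0 + length [b, a]) S F"
    using assms(2) by (simp_all add: numeral_2_eq_2)
  then have DF: "F differentiable at y" "dd [a] F differentiable at y" if "y \<in> S" for y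
    using that smooth_upto_differentiable[OF assms(2)] smooth_upto_differentiable[OF smooth_upto_dd]
    by blast+
  have "dd [b, a] F differentiable at x"
    using smooth_upto_differentiable[OF smooth_upto_dd] assms(3)
      \<open>smooth_upto (0 + length [b, a]) S F\<close> by blast
  then have "isCont (dd [b, a] F) x"
    by (rule differentiable_imp_continuous_within)
  then obtain r1 where r1: "r1 > 0" "\<And>y. dist y x < r1 \<Longrightarrow> dist (dd [b, a] F y) (dd [b, a] F x) < e"
    unfolding continuous_at_eps_delta using assms(4) by blast
  obtain r2 where r2: "r2 > 0" "ball x r2 \<subseteq> S"
    using assms(1,3) open_contains_ball by blast
  define r where "r = min r1 r2"
  define d where "d = r / (norm a + norm b + 1)"
  have nab: "norm a + norm b + 1 > 0"
    by (simp add: add_nonneg_pos)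
  have "x + s *\<^sub>R a + s' *\<^sub>R b \<in> ball x r" if "s \<in> {0..t}" "s' \<in> {0..t}" "t < d" for s s' t
  proof -
    have "norm (s *\<^sub>R a + s' *\<^sub>R b) \<le> s * norm a + s' * norm b"
      using norm_triangle_ineq[of "s *\<^sub>R a" "s' *\<^sub>R b"] that by simp
    also have "\<dots> \<le> t * (norm a + norm b + 1)"
      using that mult_right_mono[of s t "norm a"] mult_right_mono[of s' t "norm b"]
      by (simp add: algebra_simps)
    also have "\<dots> < r"
      using that nab by (simp add: d_def pos_less_divide_eq)
    finally show ?thesis
      using norm_minus_cancel[of "s *\<^sub>R a + s' *\<^sub>R b"] by (simp add: dist_norm)
  qed
  moreover have "y \<in> S" "norm (dd [b, a] F y - dd [b, a] F x) \<le> e" if "y \<in> ball x r" for y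
  proof -
    have "dist y x < r1" "y \<in> ball x r2"
      using that by (auto simp: r_def dist_commute)
    then show "y \<in> S" "norm (dd [b, a] F y - dd [b, a] F x) \<le> e"
      using r1(2)[of y] r2(2) by (auto simp: dist_norm)
  qed
  ultimately have "norm (F (x + t *\<^sub>R a + t *\<^sub>R b) - F (x + t *\<^sub>R a) - F (x + t *\<^sub>R b) + F x
      - (t * t) *\<^sub>R dd [b, a] F x) \<le> e * (t * t)" if "0 < t" "t < d" for t
    using that DF by (intro second_difference_bound[where B = "ball x r"]) auto
  moreover have "d > 0"
    using r1 r2 nab by (simp add: d_def r_def)
  ultimately show ?thesis
    using that by blast
qed

lemma dd_swap:
  fixes F :: "'a::real_normed_vector \<Rightarrow> 'b::real_inner"
  assumes "open S" "smooth_upto 2 S F" "x \<in> S"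
  shows "dd [b, a] F x = dd [a, b] F x"
proof -
  have "norm (dd [b, a] F x - dd [a, b] F x) \<le> 2 * e" if e: "e > 0" for e
  proof -
    obtain d1 where d1: "d1 > 0" "\<And>t. 0 < t \<Longrightarrow> t < d1 \<Longrightarrow>
      norm (F (x + t *\<^sub>R a + t *\<^sub>R b) - F (x + t *\<^sub>R a) - F (x + t *\<^sub>R b) + F x
            - (t * t) *\<^sub>R dd [b, a] F x) \<le> e * (t * t)"
      using second_difference_approx[OF assms e] by blast
    obtain d2 where d2: "d2 > 0" "\<And>t. 0 < t \<Longrightarrow> t < d2 \<Longrightarrow>
      norm (F (x + t *\<^sub>R b + t *\<^sub>R a) - F (x + t *\<^sub>R b) - F (x + t *\<^sub>R a) + F x
            - (t * t) *\<^sub>R dd [a, b] F x) \<le> e * (t * t)"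
      using second_difference_approx[OF assms e] by blast
    define t where "t = min d1 d2 / 2"
    have t: "0 < t" "t < d1" "t < d2"
      using d1(1) d2(1) by (auto simp: t_def)
    define \<Delta> where "\<Delta> = F (x + t *\<^sub>R a + t *\<^sub>R b) - F (x + t *\<^sub>R a) - F (x + t *\<^sub>R b) + F x"
    have "norm (\<Delta> - (t * t) *\<^sub>R dd [b, a] F x) \<le> e * (t * t)"
      "norm (\<Delta> - (t * t) *\<^sub>R dd [a, b] F x) \<le> e * (t * t)"
      using d1(2)[OF t(1,2)] d2(2)[OF t(1,3)] by (simp_all add: \<Delta>_def algebra_simps)
    then have "norm ((\<Delta> - (t * t) *\<^sub>R dd [a, b] F x) - (\<Delta> - (t * t) *\<^sub>R dd [b, a] F x))
        \<le> (t * t) * (2 * e)"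
      using norm_triangle_ineq4[of "\<Delta> - (t * t) *\<^sub>R dd [a, b] F x" "\<Delta> - (t * t) *\<^sub>R dd [b, a] F x"]
      by (simp add: algebra_simps)
    moreover have "(\<Delta> - (t * t) *\<^sub>R dd [a, b] F x) - (\<Delta> - (t * t) *\<^sub>R dd [b, a] F x)
        = (t * t) *\<^sub>R (dd [b, a] F x - dd [a, b] F x)"
      by (simp add: scaleR_diff_right)
    ultimately have "(t * t) * norm (dd [b, a] F x - dd [a, b] F x) \<le> (t * t) * (2 * e)"
      by simp
    then show ?thesis
      using t(1) by (simp add: mult_le_cancel_left_pos)
  qed
  then have "norm (dd [b, a] F x - dd [a, b] F x) \<le> 0 + e" if "e > 0" for e
    using that by (metis half_gt_zero add_0 mult_2 field_sum_of_halves)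
  then have "norm (dd [b, a] F x - dd [a, b] F x) \<le> 0"
    by (rule field_le_epsilon)
  then show ?thesis by simp
qed

lemma dd_Cons_eq_append:
  fixes F :: "'a::real_normed_vector \<Rightarrow> 'b::real_inner"
  assumes "smooth_on S F" "x \<in> S"
  shows "dd (a # vs) F x = dd (vs @ [a]) F x"
  using assms(2)
proof (induction vs arbitrary: x)
  case (Cons v vs)
  have S: "open S" "smooth_upto 2 S (dd vs F)"
    using assms(1) smooth_upto_dd[of 2 vs S F] by (auto simp: smooth_on_iff_smooth_upto)
  have "dd (a # v # vs) F x = dd [a, v] (dd vs F) x"
    by simp
  also have "\<dots> = dd [v, a] (dd vs F) x"
    by (rule dd_swap[OF S Cons.prems])
  also have "\<dots> = frechet_derivative (dd (vs @ [a]) F) (at x) v"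
  proof -
    have "dd (a # vs) F differentiable at x"
      using assms(1) Cons.prems unfolding smooth_on_def by blast
    then have "frechet_derivative (dd (a # vs) F) (at x) = frechet_derivative (dd (vs @ [a]) F) (at x)"
      by (rule frechet_derivative_transform_within_open[OF _ S(1) Cons.prems]) (rule Cons.IH)
    then show ?thesis by simp
  qed
  finally show ?case by simp
qed simp

section \<open>Big-O bounds as the parameter tends to 0 from the right\<close>

text \<open>\<open>bigo_pow k f\<close> says \<open>f e = O(e ^ k)\<close> for vector-valued \<open>f\<close>; the Landau symbols of the
  library require a normed field as codomain.\<close>

definition bigo_pow :: "nat \<Rightarrow> (real \<Rightarrow> 'a::real_normed_vector) \<Rightarrow> bool" where
  "bigo_pow k f \<longleftrightarrow> (\<exists>c. eventually (\<lambda>e. norm (f e) \<le> c * e ^ k) (at_right 0))"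

lemma eventually_at_right_0_less_1: "eventually (\<lambda>e::real. 0 < e \<and> e < 1) (at_right 0)"
  using eventually_at_right_real[of 0 1] by simp

lemma bigo_pow_iff_landau: "bigo_pow k f \<longleftrightarrow> (\<lambda>e. norm (f e)) \<in> O[at_right 0](\<lambda>e. e ^ k)"
proof
  assume "bigo_pow k f"
  then obtain c where c: "eventually (\<lambda>e. norm (f e) \<le> c * e ^ k) (at_right 0)"
    unfolding bigo_pow_def by blast
  show "(\<lambda>e. norm (f e)) \<in> O[at_right 0](\<lambda>e. e ^ k)"
    by (rule bigoI[of _ c]) (use eventually_conj[OF c eventually_at_right_0_less_1] in \<open>eventually_elim, simp\<close>)
next
  assume "(\<lambda>e. norm (f e)) \<in> O[at_right 0](\<lambda>e. e ^ k)"
  then obtain c where c: "eventually (\<lambda>e. norm (norm (f e)) \<le> c * norm (e ^ k)) (at_right 0)"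
    unfolding bigo_def by blast
  have "eventually (\<lambda>e. norm (f e) \<le> c * e ^ k) (at_right 0)"
    using eventually_conj[OF c eventually_at_right_0_less_1] by eventually_elim (auto simp: power_abs)
  then show "bigo_pow k f"
    unfolding bigo_pow_def by blast
qed

lemma bigo_pow_cong:
  assumes "bigo_pow k f" "eventually (\<lambda>e. f e = g e) (at_right 0)"
  shows "bigo_pow k g"
proof -
  obtain c where "eventually (\<lambda>e. norm (f e) \<le> c * e ^ k) (at_right 0)"
    using assms(1) unfolding bigo_pow_def by blast
  then have "eventually (\<lambda>e. norm (g e) \<le> c * e ^ k) (at_right 0)"
    using assms(2) by eventually_elim auto
  then show ?thesis
    unfolding bigo_pow_def by blast
qed

lemma bigo_pow_zero: "bigo_pow k (\<lambda>e. 0)"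
  unfolding bigo_pow_def by (rule exI[of _ 0]) simp

lemma bigo_pow_add:
  assumes "bigo_pow k f" "bigo_pow k g"
  shows "bigo_pow k (\<lambda>e. f e + g e)"
proof -
  obtain c d where "eventually (\<lambda>e. norm (f e) \<le> c * e ^ k) (at_right 0)"
    and "eventually (\<lambda>e. norm (g e) \<le> d * e ^ k) (at_right 0)"
    using assms unfolding bigo_pow_def by blast
  then have "eventually (\<lambda>e. norm (f e + g e) \<le> (c + d) * e ^ k) (at_right 0)"
  proof eventually_elim
    case (elim e)
    then show ?case
      using norm_triangle_ineq[of "f e" "g e"] unfolding distrib_right by linarith
  qed
  then show ?thesis
    unfolding bigo_pow_def by blast
qed

lemma bigo_pow_minus: "bigo_pow k f \<Longrightarrow> bigo_pow k (\<lambda>e. - f e)"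
  unfolding bigo_pow_def by simp

lemma bigo_pow_diff: "bigo_pow k f \<Longrightarrow> bigo_pow k g \<Longrightarrow> bigo_pow k (\<lambda>e. f e - g e)"
  using bigo_pow_add[OF _ bigo_pow_minus, of k f g] by simp

lemma bigo_pow_sum:
  "(\<And>i. i \<in> I \<Longrightarrow> bigo_pow k (f i)) \<Longrightarrow> bigo_pow k (\<lambda>e. \<Sum>i\<in>I. f i e)"
proof (induction I rule: infinite_finite_induct)
  case (insert i I)
  then show ?case by (simp add: bigo_pow_add)
qed (simp_all add: bigo_pow_zero)

lemma bigo_pow_mono:
  assumes "bigo_pow k f" "j \<le> k"
  shows "bigo_pow j f"
proof -
  obtain c where "eventually (\<lambda>e. norm (f e) \<le> c * e ^ k) (at_right 0)"
    using assms(1) unfolding bigo_pow_def by blast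
  then have "eventually (\<lambda>e. norm (f e) \<le> max c 0 * e ^ j) (at_right 0)"
    using eventually_at_right_0_less_1
  proof eventually_elim
    case (elim e)
    have "c * e ^ k \<le> max c 0 * e ^ k"
      using elim by (intro mult_right_mono) auto
    also have "\<dots> \<le> max c 0 * e ^ j"
      using elim assms(2) by (intro mult_left_mono power_decreasing) auto
    finally show ?case
      using elim by linarith
  qed
  then show ?thesis
    unfolding bigo_pow_def by blast
qed

lemma bigo_pow_scaleR:
  assumes "bigo_pow k a" "bigo_pow j u"
  shows "bigo_pow (k + j) (\<lambda>e. a e *\<^sub>R u e)"
proof -
  obtain c d where "eventually (\<lambda>e. norm (a e) \<le> c * e ^ k) (at_right 0)"
    and "eventually (\<lambda>e. norm (u e) \<le> d * e ^ j) (at_right 0)"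
    using assms unfolding bigo_pow_def by blast
  then have "eventually (\<lambda>e. norm (a e *\<^sub>R u e) \<le> (c * d) * e ^ (k + j)) (at_right 0)"
  proof eventually_elim
    case (elim e)
    have "norm (a e) * norm (u e) \<le> (c * e ^ k) * (d * e ^ j)"
      using mult_mono[OF elim order_trans[OF norm_ge_zero elim(1)] norm_ge_zero] .
    then have "norm (a e *\<^sub>R u e) \<le> (c * e ^ k) * (d * e ^ j)"
      by simp
    then show ?case
      by (simp add: power_add algebra_simps)
  qed
  then show ?thesis
    unfolding bigo_pow_def by blast
qed

lemma bigo_pow_power: "bigo_pow k (\<lambda>e. e ^ k)"
  unfolding bigo_pow_def
  by (rule exI[of _ 1]) (use eventually_at_right_0_less_1 in \<open>eventually_elim, simp\<close>)

lemma bigo_pow_const: "bigo_pow 0 (\<lambda>e. c)"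
  unfolding bigo_pow_def by (rule exI[of _ "norm c"]) simp

lemma bigo_pow_power_scaleR:
  "bigo_pow k f \<Longrightarrow> bigo_pow (j + k) (\<lambda>e. e ^ j *\<^sub>R f e)"
  by (rule bigo_pow_scaleR[OF bigo_pow_power])

lemma bigo_pow_bounded_linear:
  assumes "bounded_linear L" "bigo_pow k f"
  shows "bigo_pow k (\<lambda>e. L (f e))"
proof -
  obtain K where K: "\<And>x. norm (L x) \<le> norm x * K" "K > 0"
    using bounded_linear.pos_bounded[OF assms(1)] by blast
  obtain c where "eventually (\<lambda>e. norm (f e) \<le> c * e ^ k) (at_right 0)"
    using assms(2) unfolding bigo_pow_def by blast
  then have "eventually (\<lambda>e. norm (L (f e)) \<le> (K * c) * e ^ k) (at_right 0)"
  proof eventually_elim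
    case (elim e)
    have "norm (L (f e)) \<le> (c * e ^ k) * K"
      using order_trans[OF K(1) mult_right_mono[OF elim less_imp_le[OF K(2)]]] .
    then show ?case
      by (simp add: algebra_simps)
  qed
  then show ?thesis
    unfolding bigo_pow_def by blast
qed

lemma bigo_pow_0_if_tendsto:
  assumes "(f \<longlongrightarrow> l) (at_right 0)"
  shows "bigo_pow 0 f"
proof -
  have "eventually (\<lambda>e. dist (f e) l < 1) (at_right 0)"
    using assms by (rule tendstoD) simp
  then have "eventually (\<lambda>e. norm (f e) \<le> (norm l + 1) * e ^ 0) (at_right 0)"
  proof eventually_elim
    case (elim e)
    then show ?case
      using norm_triangle_ineq2[of "f e" l] by (simp add: dist_norm)
  qed
  then show ?thesis
    unfolding bigo_pow_def by blast
qed

lemma bigo_pow_Suc_tendsto_0: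
  assumes "bigo_pow (Suc k) f"
  shows "(f \<longlongrightarrow> 0) (at_right 0)"
proof -
  obtain c where c: "eventually (\<lambda>e. norm (f e) \<le> c * e ^ Suc k) (at_right 0)"
    using assms unfolding bigo_pow_def by blast
  have "((\<lambda>e::real. c * e ^ Suc k) \<longlongrightarrow> c * 0 ^ Suc k) (at_right 0)"
    by (intro tendsto_mult tendsto_const tendsto_power tendsto_ident_at)
  then have "((\<lambda>e::real. c * e ^ Suc k) \<longlongrightarrow> 0) (at_right 0)"
    by simp
  then show ?thesis
    by (rule Lim_null_comparison[OF c])
qed

lemma bigo_pow_Suc_scaleR_cancel:
  assumes "bigo_pow (Suc k) (\<lambda>e. e *\<^sub>R f e)"
  shows "bigo_pow k f"
proof -
  obtain c where "eventually (\<lambda>e. norm (e *\<^sub>R f e) \<le> c * e ^ Suc k) (at_right 0)"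
    using assms unfolding bigo_pow_def by blast
  then have "eventually (\<lambda>e. norm (f e) \<le> c * e ^ k) (at_right 0)"
    using eventually_at_right_0_less_1 by eventually_elim (simp add: mult.left_commute)
  then show ?thesis
    unfolding bigo_pow_def by blast
qed

lemma bigo_pow_polynomial_eq_0:
  fixes a :: "nat \<Rightarrow> 'a::real_normed_vector"
  assumes "bigo_pow (Suc q) (\<lambda>e. \<Sum>l\<le>q. e ^ l *\<^sub>R a l)" "l \<le> q"
  shows "a l = 0"
  using assms
proof (induction q arbitrary: a l)
  case 0
  have "((\<lambda>e::real. a 0) \<longlongrightarrow> 0) (at_right 0)"
    using bigo_pow_Suc_tendsto_0[OF "0.prems"(1)] by simp
  then show ?case
    using "0.prems"(2) by (simp add: tendsto_const_iff[OF trivial_limit_at_right_real])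
next
  case (Suc q)
  define P where "P e = (\<Sum>l\<le>q. e ^ l *\<^sub>R a (Suc l))" for e :: real
  have eq: "(\<Sum>l\<le>Suc q. e ^ l *\<^sub>R a l) = a 0 + e *\<^sub>R P e" for e
    unfolding P_def by (simp add: sum.atMost_Suc_shift scaleR_sum_right del: sum.atMost_Suc)
  have "((\<lambda>e. a 0 + e *\<^sub>R P e) \<longlongrightarrow> a 0 + 0 *\<^sub>R P 0) (at_right 0)"
    unfolding P_def by (intro tendsto_intros)
  moreover have "((\<lambda>e. a 0 + e *\<^sub>R P e) \<longlongrightarrow> 0) (at_right 0)"
    using bigo_pow_Suc_tendsto_0[OF Suc.prems(1)] by (simp only: eq)
  ultimately have a0: "a 0 = 0"
    using tendsto_unique[OF trivial_limit_at_right_real] by force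
  have "bigo_pow (Suc (Suc q)) (\<lambda>e. e *\<^sub>R P e)"
    using Suc.prems(1) by (simp only: eq a0 add_0_left)
  then have "bigo_pow (Suc q) P"
    by (rule bigo_pow_Suc_scaleR_cancel)
  then show ?case
    using Suc.IH[of "\<lambda>l. a (Suc l)"] a0 Suc.prems(2) unfolding P_def by (cases l) auto
qed

lemma asymptotic_expansion_unique:
  fixes a b :: "nat \<Rightarrow> 'a::real_normed_vector"
  assumes "bigo_pow (Suc q) (\<lambda>e. f e - (\<Sum>l\<le>q. e ^ l *\<^sub>R a l))"
    and "bigo_pow (Suc q) (\<lambda>e. f e - (\<Sum>l\<le>q. e ^ l *\<^sub>R b l))" "l \<le> q"
  shows "a l = b l"
proof -
  have "bigo_pow (Suc q) (\<lambda>e. \<Sum>l\<le>q. e ^ l *\<^sub>R (b l - a l))"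
    using bigo_pow_diff[OF assms(1,2)] by (simp add: scaleR_diff_right sum_subtractf)
  from bigo_pow_polynomial_eq_0[OF this assms(3)] show ?thesis
    by simp
qed

section \<open>Taylor expansion and local Lipschitz bounds\<close>

lemma has_derivative_power_over_fact:
  "((\<lambda>t::real. (t ^ Suc l / fact (Suc l)) *\<^sub>R v) has_derivative (\<lambda>h. h *\<^sub>R ((t ^ l / fact l) *\<^sub>R v))) (at t)"
proof -
  have "((\<lambda>t::real. t ^ Suc l / fact (Suc l)) has_real_derivative (real (Suc l) * t ^ l / fact (Suc l))) (at t)"
    using DERIV_cdivide[OF DERIV_pow[of "Suc l" t], of "fact (Suc l)"] by simp
  moreover have "real (Suc l) * t ^ l / fact (Suc l) = t ^ l / fact l"
    by (simp add: fact_Suc divide_simps del: of_nat_Suc)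
  ultimately have "((\<lambda>t::real. t ^ Suc l / fact (Suc l)) has_derivative (*) (t ^ l / fact l)) (at t)"
    by (simp add: has_field_derivative_def)
  from has_derivative_scaleR_left[OF this, of v] show ?thesis
    by (simp add: mult.commute)
qed

lemma bigo_pow_Suc_if_derivative:
  fixes R :: "real \<Rightarrow> 'b::real_inner"
  assumes "d > 0" "R 0 = 0"
    and "\<And>t. t \<in> {-d<..<d} \<Longrightarrow> (R has_derivative (\<lambda>h. h *\<^sub>R R' t)) (at t)"
    and "bigo_pow n R'"
  shows "bigo_pow (Suc n) R"
proof -
  obtain c b where b: "b > 0" "\<And>t. 0 < t \<Longrightarrow> t < b \<Longrightarrow> norm (R' t) \<le> c * t ^ n"
    using assms(4) unfolding bigo_pow_def eventually_at_right_field by auto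
  have "norm (R t) \<le> max c 0 * t ^ Suc n" if t: "0 < t" "t < min b d" for t
  proof -
    have "norm (R t - R 0) \<le> t * (max c 0 * t ^ n)"
    proof (rule mvt_norm_bound[OF t(1)])
      show "(R has_derivative (\<lambda>h. h *\<^sub>R R' s)) (at s)" if "s \<in> {0..t}" for s
        using that t by (intro assms(3)) auto
      show "norm (R' s) \<le> max c 0 * t ^ n" if s: "s \<in> {0<..<t}" for s
      proof -
        have "norm (R' s) \<le> c * s ^ n"
          using b(2)[of s] s t by auto
        also have "\<dots> \<le> max c 0 * s ^ n"
          using s by (intro mult_right_mono) auto
        also have "\<dots> \<le> max c 0 * t ^ n"
          using s by (intro mult_left_mono power_mono) auto
        finally show ?thesis .
      qed
    qed
    then have "norm (R t) \<le> t * (max c 0 * t ^ n)"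
      using assms(2) by simp
    then show ?thesis
      by (simp add: mult.left_commute)
  qed
  then show ?thesis
    unfolding bigo_pow_def eventually_at_right_field using b(1) assms(1)
    by (intro exI[of _ "max c 0"] exI[of _ "min b d"]) auto
qed

lemma bigo_pow_taylor_remainder:
  fixes f :: "nat \<Rightarrow> real \<Rightarrow> 'b::real_inner"
  assumes "d > 0"
    and "\<And>k t. t \<in> {-d<..<d} \<Longrightarrow> (f k has_derivative (\<lambda>h. h *\<^sub>R f (Suc k) t)) (at t)"
  shows "bigo_pow n (\<lambda>t. f 0 t - (\<Sum>l<n. (t ^ l / fact l) *\<^sub>R f l 0))"
  using assms(2)
proof (induction n arbitrary: f)
  case 0
  have "isCont (f 0) 0"
    using has_derivative_continuous[OF "0.prems"[of 0 0]] assms(1) by simp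
  then have "(f 0 \<longlongrightarrow> f 0 0) (at_right 0)"
    by (simp add: isCont_def filterlim_at_split)
  then show ?case
    by (simp add: bigo_pow_0_if_tendsto)
next
  case (Suc n)
  define R' where "R' t = f (Suc 0) t - (\<Sum>l<n. (t ^ l / fact l) *\<^sub>R f (Suc l) 0)" for t
  define R where "R t = f 0 t - f 0 0 - (\<Sum>l<n. (t ^ Suc l / fact (Suc l)) *\<^sub>R f (Suc l) 0)" for t
  have "bigo_pow (Suc n) R"
  proof (rule bigo_pow_Suc_if_derivative[OF assms(1)])
    show "R 0 = 0"
      by (simp add: R_def)
    show "bigo_pow n R'"
      unfolding R'_def using Suc.IH[of "\<lambda>k. f (Suc k)"] Suc.prems by simp
    show "(R has_derivative (\<lambda>h. h *\<^sub>R R' t)) (at t)" if "t \<in> {-d<..<d}" for t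
    proof -
      have "(R has_derivative (\<lambda>h. h *\<^sub>R f (Suc 0) t - 0
          - (\<Sum>l<n. h *\<^sub>R ((t ^ l / fact l) *\<^sub>R f (Suc l) 0)))) (at t)"
        unfolding R_def
        by (intro has_derivative_diff has_derivative_sum Suc.prems[OF that] has_derivative_const
            has_derivative_power_over_fact)
      then show ?thesis
        unfolding R'_def by (simp add: scaleR_diff_right scaleR_sum_right)
    qed
  qed
  moreover have "f 0 t - (\<Sum>l<Suc n. (t ^ l / fact l) *\<^sub>R f l 0) = R t" for t
    unfolding R_def by (simp add: sum.lessThan_Suc_shift del: sum.lessThan_Suc)
  ultimately show ?case
    by simp
qed

lemma smooth_on_taylor_along_line:
  fixes F :: "'a::real_normed_vector \<Rightarrow> 'b::real_inner"
  assumes "smooth_on S F" "d > 0" "\<And>t. t \<in> {-d<..<d} \<Longrightarrow> p + t *\<^sub>R c \<in> S"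
  shows "bigo_pow n (\<lambda>t. dd vs F (p + t *\<^sub>R c)
           - (\<Sum>l<n. (t ^ l / fact l) *\<^sub>R dd (replicate l c @ vs) F p))"
proof -
  have "bigo_pow n (\<lambda>t. (\<lambda>k t. dd (replicate k c @ vs) F (p + t *\<^sub>R c)) 0 t
      - (\<Sum>l<n. (t ^ l / fact l) *\<^sub>R (\<lambda>k t. dd (replicate k c @ vs) F (p + t *\<^sub>R c)) l 0))"
  proof (rule bigo_pow_taylor_remainder[OF assms(2)])
    fix k t assume "t \<in> {-d<..<d}"
    then have "dd (replicate k c @ vs) F differentiable at (p + t *\<^sub>R c)"
      using assms(1,3) unfolding smooth_on_def by blast
    from has_derivative_along_line[OF this]
    show "((\<lambda>t. dd (replicate k c @ vs) F (p + t *\<^sub>R c)) has_derivative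
        (\<lambda>h. h *\<^sub>R dd (replicate (Suc k) c @ vs) F (p + t *\<^sub>R c))) (at t)"
      by simp
  qed
  then show ?thesis
    by simp
qed

lemma smooth_upto_onorm_bound:
  fixes F :: "'a::euclidean_space \<Rightarrow> 'b::real_normed_vector"
  assumes "open S" "smooth_upto 1 S F" "x0 \<in> S"
  obtains r K where "r > 0" "ball x0 r \<subseteq> S" "K \<ge> 0"
    "\<And>x. x \<in> ball x0 r \<Longrightarrow> onorm (frechet_derivative F (at x)) \<le> K"
proof -
  define K where "K = (\<Sum>b\<in>Basis. norm (frechet_derivative F (at x0) b) + 1)"
  have "eventually (\<lambda>x. norm (frechet_derivative F (at x) b) \<le> norm (frechet_derivative F (at x0) b) + 1)
      (nhds x0)" for b
  proof -
    have "isCont (\<lambda>x. frechet_derivative F (at x) b) x0"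
      using assms(2,3) by (intro differentiable_imp_continuous_within) (simp add: smooth_upto_Suc smooth_upto_0)
    then obtain \<delta> where "\<delta> > 0"
      "\<And>x. dist x x0 < \<delta> \<Longrightarrow> dist (frechet_derivative F (at x) b) (frechet_derivative F (at x0) b) < 1"
      unfolding continuous_at_eps_delta using zero_less_one by blast
    then have "eventually (\<lambda>x. dist (frechet_derivative F (at x) b) (frechet_derivative F (at x0) b) < 1)
        (nhds x0)"
      unfolding eventually_nhds_metric by blast
    then show ?thesis
      by eventually_elim (use norm_triangle_ineq2 in \<open>smt (verit) dist_norm\<close>)
  qed
  then have "eventually (\<lambda>x. x \<in> S \<and> (\<forall>b\<in>Basis.
      norm (frechet_derivative F (at x) b) \<le> norm (frechet_derivative F (at x0) b) + 1)) (nhds x0)"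
    using eventually_nhds_in_open[OF assms(1,3)] by (intro eventually_conj eventually_ball_finite) auto
  then obtain r where r: "r > 0" and bound: "\<And>x. x \<in> ball x0 r \<Longrightarrow> x \<in> S \<and> (\<forall>b\<in>Basis.
      norm (frechet_derivative F (at x) b) \<le> norm (frechet_derivative F (at x0) b) + 1)"
    unfolding eventually_nhds_metric by (auto simp: dist_commute)
  have onorm: "onorm (frechet_derivative F (at x)) \<le> K" if x: "x \<in> ball x0 r" for x
  proof (rule onorm_le)
    fix v
    have dF: "F differentiable at x"
      using bound[OF x] smooth_upto_differentiable[OF assms(2)] by blast
    have "norm (frechet_derivative F (at x) v)
        \<le> (\<Sum>b\<in>Basis. norm ((v \<bullet> b) *\<^sub>R frechet_derivative F (at x) b))"
      unfolding frechet_derivative_Basis_expansion[OF dF, of v] by (rule norm_sum)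
    also have "\<dots> \<le> (\<Sum>b\<in>Basis. norm v * (norm (frechet_derivative F (at x0) b) + 1))"
    proof (rule sum_mono)
      fix b :: 'a assume b: "b \<in> Basis"
      show "norm ((v \<bullet> b) *\<^sub>R frechet_derivative F (at x) b)
          \<le> norm v * (norm (frechet_derivative F (at x0) b) + 1)"
        using mult_mono[OF Basis_le_norm[OF b] bspec[OF conjunct2[OF bound[OF x]] b]] by simp
    qed
    finally show "norm (frechet_derivative F (at x) v) \<le> K * norm v"
      by (simp add: K_def sum_distrib_left mult.commute)
  qed
  moreover have "ball x0 r \<subseteq> S"
    using bound by blast
  moreover have "K \<ge> 0"
    unfolding K_def by (intro sum_nonneg) simp
  ultimately show ?thesis
    using r onorm by (intro that)
qed

lemma smooth_upto_local_lipschitz: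
  fixes F :: "'a::euclidean_space \<Rightarrow> 'b::real_normed_vector"
  assumes "open S" "smooth_upto 1 S F" "x0 \<in> S"
  obtains r K where "r > 0" "K-lipschitz_on (ball x0 r) F"
proof (rule smooth_upto_onorm_bound[OF assms])
  fix r K assume r: "r > 0" "ball x0 r \<subseteq> S" "K \<ge> 0"
    and K: "\<And>x. x \<in> ball x0 r \<Longrightarrow> onorm (frechet_derivative F (at x)) \<le> K"
  have "K-lipschitz_on (ball x0 r) F"
  proof (rule bounded_derivative_imp_lipschitz)
    show "(F has_derivative frechet_derivative F (at x)) (at x within ball x0 r)" if "x \<in> ball x0 r" for x
      using that r(2) smooth_upto_differentiable[OF assms(2)]
      by (intro has_derivative_at_withinI[OF has_frechet_derivative]) blast
  qed (use K r in auto)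
  with r(1) show thesis
    by (rule that)
qed

lemma bigo_pow_smooth_compose_diff:
  fixes F :: "'a::euclidean_space \<Rightarrow> 'b::real_normed_vector"
  assumes "open S" "smooth_upto 1 S F" "x0 \<in> S"
    and "(p \<longlongrightarrow> x0) (at_right 0)" "(p' \<longlongrightarrow> x0) (at_right 0)" "bigo_pow k (\<lambda>e. p e - p' e)"
  shows "bigo_pow k (\<lambda>e. F (p e) - F (p' e))"
proof -
  obtain r K where r: "r > 0" and K: "K-lipschitz_on (ball x0 r) F"
    using smooth_upto_local_lipschitz[OF assms(1-3)] .
  obtain c where c: "eventually (\<lambda>e. norm (p e - p' e) \<le> c * e ^ k) (at_right 0)"
    using assms(6) unfolding bigo_pow_def by blast
  have "eventually (\<lambda>e. p e \<in> ball x0 r) (at_right 0)" "eventually (\<lambda>e. p' e \<in> ball x0 r) (at_right 0)"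
    using topological_tendstoD[OF assms(4) open_ball] topological_tendstoD[OF assms(5) open_ball] r
    by simp_all
  then have "eventually (\<lambda>e. norm (F (p e) - F (p' e)) \<le> (K * c) * e ^ k) (at_right 0)"
    using c
  proof eventually_elim
    case (elim e)
    then have "norm (F (p e) - F (p' e)) \<le> K * norm (p e - p' e)"
      using lipschitz_onD[OF K] by (simp add: dist_norm)
    also have "\<dots> \<le> K * (c * e ^ k)"
      using elim lipschitz_on_nonneg[OF K] by (intro mult_left_mono) auto
    finally show ?case
      by (simp add: mult.assoc)
  qed
  then show ?thesis
    unfolding bigo_pow_def by blast
qed

section \<open>Products of expansions\<close>

lemma bigo_pow_cauchy_product_truncation:
  fixes X :: "nat \<Rightarrow> nat \<Rightarrow> 'a::real_normed_vector"
  shows "bigo_pow (Suc q) (\<lambda>e. (\<Sum>k\<le>q. \<Sum>l<q. e ^ (l + k + 1) *\<^sub>R X l k)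
           - (\<Sum>i\<le>q. e ^ (i + 1) *\<^sub>R (\<Sum>l\<le>i. X l (i - l))))"
proof -
  define t where "t x e = e ^ (fst x + snd x + 1) *\<^sub>R X (fst x) (snd x)" for x and e :: real
  define A where "A = {..<q} \<times> {..q}"
  define B where "B = {(l, k). l + k \<le> q}"
  have fin: "finite A" "finite B"
    unfolding A_def B_def by (auto intro: finite_subset[of _ "{..q} \<times> {..q}"])
  have high: "bigo_pow (Suc q) (t x)" if "x \<in> (A - B) \<union> (B - A)" for x
  proof -
    obtain l k where x: "x = (l, k)"
      by (cases x)
    then have "q \<le> l + k"
      using that unfolding A_def B_def by auto
    then show ?thesis
      unfolding x t_def
      using bigo_pow_mono[OF bigo_pow_power_scaleR[OF bigo_pow_const[of "X l k"]], of "Suc q" "l + k + 1"]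
      by simp
  qed
  have "(\<Sum>k\<le>q. \<Sum>l<q. e ^ (l + k + 1) *\<^sub>R X l k) = (\<Sum>x\<in>A. t x e)" for e
  proof -
    have "(\<Sum>k\<le>q. \<Sum>l<q. e ^ (l + k + 1) *\<^sub>R X l k) = (\<Sum>l<q. \<Sum>k\<le>q. e ^ (l + k + 1) *\<^sub>R X l k)"
      by (rule sum.swap)
    also have "\<dots> = (\<Sum>x\<in>A. t x e)"
      unfolding A_def t_def by (simp only: sum.cartesian_product case_prod_unfold fst_conv snd_conv)
    finally show ?thesis .
  qed
  moreover have "(\<Sum>i\<le>q. e ^ (i + 1) *\<^sub>R (\<Sum>l\<le>i. X l (i - l))) = (\<Sum>x\<in>B. t x e)" for e
  proof -
    have "(\<Sum>i\<le>q. e ^ (i + 1) *\<^sub>R (\<Sum>l\<le>i. X l (i - l)))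
        = (\<Sum>i\<le>q. \<Sum>l\<le>i. e ^ (l + (i - l) + 1) *\<^sub>R X l (i - l))"
      by (intro sum.cong refl) (simp add: scaleR_sum_right)
    also have "\<dots> = (\<Sum>x\<in>B. t x e)"
      unfolding B_def t_def
      using sum.triangle_reindex_eq[of "\<lambda>l k. e ^ (l + k + 1) *\<^sub>R X l k" q, symmetric]
      by (simp only: case_prod_unfold)
    finally show ?thesis .
  qed
  moreover have "(\<Sum>x\<in>A. t x e) - (\<Sum>x\<in>B. t x e) = (\<Sum>x\<in>A - B. t x e) - (\<Sum>x\<in>B - A. t x e)" for e
    using sum.Int_Diff[OF fin(1), of "\<lambda>x. t x e" B] sum.Int_Diff[OF fin(2), of "\<lambda>x. t x e" A]
    by (simp add: Int_commute)
  moreover have "bigo_pow (Suc q) (\<lambda>e. (\<Sum>x\<in>A - B. t x e) - (\<Sum>x\<in>B - A. t x e))"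
    using high by (intro bigo_pow_diff bigo_pow_sum) auto
  ultimately show ?thesis
    by simp
qed

lemma bigo_pow_0_if_expansion:
  assumes "bigo_pow q (\<lambda>e. f e - (\<Sum>l<q. e ^ l *\<^sub>R a l))"
  shows "bigo_pow 0 f"
proof -
  have "bigo_pow 0 (\<lambda>e. \<Sum>l<q. e ^ l *\<^sub>R a l)"
    by (intro bigo_pow_sum bigo_pow_mono[OF bigo_pow_power_scaleR[OF bigo_pow_const]]) simp
  from bigo_pow_add[OF bigo_pow_mono[OF assms] this] show ?thesis
    by simp
qed

lemma bigo_pow_linear_apply:
  fixes L :: "real \<Rightarrow> 'a::euclidean_space \<Rightarrow> 'b::real_normed_vector"
  assumes "eventually (\<lambda>e. linear (L e)) (at_right 0)" "\<And>b. bigo_pow 0 (\<lambda>e. L e b)" "bigo_pow k D"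
  shows "bigo_pow k (\<lambda>e. L e (D e))"
proof (rule bigo_pow_cong)
  show "bigo_pow k (\<lambda>e. \<Sum>b\<in>Basis. (D e \<bullet> b) *\<^sub>R L e b)"
  proof (intro bigo_pow_sum)
    fix b :: 'a
    from bigo_pow_scaleR[OF bigo_pow_bounded_linear[OF bounded_linear_inner_left assms(3)] assms(2)]
    show "bigo_pow k (\<lambda>e. (D e \<bullet> b) *\<^sub>R L e b)"
      by simp
  qed
  show "eventually (\<lambda>e. (\<Sum>b\<in>Basis. (D e \<bullet> b) *\<^sub>R L e b) = L e (D e)) (at_right 0)"
    using assms(1) by eventually_elim (rule linear_Basis_expansion[symmetric])
qed

lemma bigo_pow_expansion_linear_apply:
  fixes L :: "real \<Rightarrow> 'a::euclidean_space \<Rightarrow> 'b::real_normed_vector"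
  assumes lin: "eventually (\<lambda>e. linear (L e)) (at_right 0)"
    and L: "\<And>a. bigo_pow q (\<lambda>e. L e a - (\<Sum>l<q. e ^ l *\<^sub>R B l a))"
    and u: "bigo_pow (Suc q) (\<lambda>e. u e - (\<Sum>k\<le>q. e ^ k *\<^sub>R c k))"
  shows "bigo_pow (Suc q) (\<lambda>e. e *\<^sub>R L e (u e) - (\<Sum>i\<le>q. e ^ (i + 1) *\<^sub>R (\<Sum>l\<le>i. B l (c (i - l)))))"
proof -
  define D where "D e = u e - (\<Sum>k\<le>q. e ^ k *\<^sub>R c k)" for e
  have "bigo_pow (Suc q) (\<lambda>e. L e (D e))"
    using u unfolding D_def by (intro bigo_pow_linear_apply[OF lin bigo_pow_0_if_expansion[OF L]])
  from bigo_pow_mono[OF bigo_pow_power_scaleR[OF this, of 1]]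
  have "bigo_pow (Suc q) (\<lambda>e. e *\<^sub>R L e (D e))"
    by simp
  moreover have "bigo_pow (Suc q) (\<lambda>e. \<Sum>k\<le>q. e ^ Suc k *\<^sub>R (L e (c k) - (\<Sum>l<q. e ^ l *\<^sub>R B l (c k))))"
    by (intro bigo_pow_sum bigo_pow_mono[OF bigo_pow_power_scaleR[OF L]]) simp
  ultimately have "bigo_pow (Suc q) (\<lambda>e. e *\<^sub>R L e (D e)
      + (\<Sum>k\<le>q. e ^ Suc k *\<^sub>R (L e (c k) - (\<Sum>l<q. e ^ l *\<^sub>R B l (c k))))
      + ((\<Sum>k\<le>q. \<Sum>l<q. e ^ (l + k + 1) *\<^sub>R B l (c k))
         - (\<Sum>i\<le>q. e ^ (i + 1) *\<^sub>R (\<Sum>l\<le>i. B l (c (i - l))))))"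
    by (intro bigo_pow_add bigo_pow_cauchy_product_truncation)
  moreover have "eventually (\<lambda>e. e *\<^sub>R L e (D e)
      + (\<Sum>k\<le>q. e ^ Suc k *\<^sub>R (L e (c k) - (\<Sum>l<q. e ^ l *\<^sub>R B l (c k))))
      + ((\<Sum>k\<le>q. \<Sum>l<q. e ^ (l + k + 1) *\<^sub>R B l (c k))
         - (\<Sum>i\<le>q. e ^ (i + 1) *\<^sub>R (\<Sum>l\<le>i. B l (c (i - l)))))
      = e *\<^sub>R L e (u e) - (\<Sum>i\<le>q. e ^ (i + 1) *\<^sub>R (\<Sum>l\<le>i. B l (c (i - l))))) (at_right 0)"
    using lin
  proof eventually_elim
    case (elim e)
    interpret linear "L e" by fact
    have "L e (u e) = L e (D e) + (\<Sum>k\<le>q. e ^ k *\<^sub>R L e (c k))"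
      by (simp add: D_def diff sum scale)
    moreover have "(\<Sum>k\<le>q. e ^ Suc k *\<^sub>R (\<Sum>l<q. e ^ l *\<^sub>R B l (c k)))
        = (\<Sum>k\<le>q. \<Sum>l<q. e ^ (l + k + 1) *\<^sub>R B l (c k))"
      by (simp add: scaleR_sum_right power_add mult_ac)
    ultimately show ?case
      by (simp add: scaleR_sum_right scaleR_diff_right sum_subtractf algebra_simps)
  qed
  ultimately show ?thesis
    by (rule bigo_pow_cong)
qed

section \<open>Differentiating an expansion with respect to a parameter\<close>

lemma frechet_derivative_chain:
  assumes "(g has_derivative g') (at x)" "F differentiable at (g x)"
  shows "frechet_derivative (\<lambda>x. F (g x)) (at x) v = frechet_derivative F (at (g x)) (g' v)"
proof -
  have "(\<lambda>v. frechet_derivative F (at (g x)) (g' v)) = frechet_derivative (\<lambda>x. F (g x)) (at x)"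
    using frechet_derivative_at[OF diff_chain_at[OF assms(1) has_frechet_derivative[OF assms(2)]]]
    by (simp add: o_def)
  from this[symmetric] show ?thesis
    by simp
qed

lemma differentiable_at_slice:
  assumes "f differentiable at (y, e)"
  shows "(\<lambda>y. f (y, e)) differentiable at y"
proof -
  have "(\<lambda>y. (y, e)) differentiable at y"
    by (simp add: differentiable_Pair)
  from differentiable_chain_at[OF this] assms show ?thesis
    by (simp add: o_def)
qed

lemma has_derivative_dd_slice:
  assumes "dd vs W differentiable at (y, e)"
  shows "((\<lambda>y. dd vs W (y, e)) has_derivative (\<lambda>a. dd ((a, 0) # vs) W (y, e))) (at y)"
proof -
  have "((\<lambda>y. (y, e)) has_derivative (\<lambda>a. (a, 0))) (at y)"
    by (auto intro!: derivative_eq_intros)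
  from diff_chain_at[OF this has_frechet_derivative[OF assms]] show ?thesis
    by (simp add: o_def)
qed

lemma smooth_on_taylor_in_slice:
  fixes W :: "'a::real_normed_vector \<times> real \<Rightarrow> 'b::real_inner"
  assumes "smooth_on (U \<times> {-d<..<d}) W" "d > 0" "y \<in> U"
  shows "bigo_pow n (\<lambda>t. dd vs W (y, t)
           - (\<Sum>l<n. (t ^ l / fact l) *\<^sub>R dd (replicate l (0, 1) @ vs) W (y, 0)))"
  using smooth_on_taylor_along_line[OF assms(1,2), of "(y, 0)" "(0, 1)" n vs] assms(3) by simp

lemma smooth_expansion_coefficients:
  fixes W :: "'a::real_normed_vector \<times> real \<Rightarrow> 'b::real_inner"
  assumes "smooth_on (U \<times> {-d<..<d}) W" "d > 0" "y \<in> U"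
    and "bigo_pow (Suc q) (\<lambda>e. W (y, e) - (\<Sum>l\<le>q. e ^ l *\<^sub>R c l))" "l \<le> q"
  shows "c l = (1 / fact l) *\<^sub>R dd (replicate l (0, 1)) W (y, 0)"
proof (rule asymptotic_expansion_unique[OF assms(4) _ assms(5)])
  show "bigo_pow (Suc q) (\<lambda>e. W (y, e) - (\<Sum>l\<le>q. e ^ l *\<^sub>R (1 / fact l) *\<^sub>R dd (replicate l (0, 1)) W (y, 0)))"
    using smooth_on_taylor_in_slice[OF assms(1-3), of "Suc q" "[]"] by (simp add: lessThan_Suc_atMost)
qed

text \<open>Term-by-term differentiation in \<open>y\<close> is justified because the coefficients are Taylor
  coefficients of the smooth \<open>W\<close> and the derivatives in \<open>y\<close> and in \<open>e\<close> commute.\<close>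

lemma smooth_expansion_frechet_derivative:
  fixes W :: "'a::real_normed_vector \<times> real \<Rightarrow> 'b::real_inner" and c :: "nat \<Rightarrow> 'a \<Rightarrow> 'b"
  assumes W: "smooth_on (U \<times> {-d<..<d}) W" and y0: "y0 \<in> U" and d: "d > 0"
    and exp: "\<And>y. y \<in> U \<Longrightarrow> bigo_pow (Suc q) (\<lambda>e. W (y, e) - (\<Sum>l\<le>q. e ^ l *\<^sub>R c l y))"
  shows "bigo_pow q (\<lambda>e. frechet_derivative (\<lambda>y. W (y, e)) (at y0) a
           - (\<Sum>l<q. e ^ l *\<^sub>R frechet_derivative (c l) (at y0) a))"
proof -
  have U: "open U"
    using open_image_fst[of "U \<times> {-d<..<d}"] W d by (simp add: smooth_on_def)
  have diff: "dd vs W differentiable at (y, e)" if "y \<in> U" "e \<in> {-d<..<d}" for vs y e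
    using W that unfolding smooth_on_def by blast
  have Dc: "frechet_derivative (c l) (at y0) a = (1 / fact l) *\<^sub>R dd (replicate l (0, 1) @ [(a, 0)]) W (y0, 0)"
    if "l \<le> q" for l
  proof -
    have "((\<lambda>y. (1 / fact l) *\<^sub>R dd (replicate l (0, 1)) W (y, 0)) has_derivative
        (\<lambda>a. (1 / fact l) *\<^sub>R dd ((a, 0) # replicate l (0, 1)) W (y0, 0))) (at y0)"
      using y0 d by (intro has_derivative_scaleR_right has_derivative_dd_slice diff) auto
    then have "(c l has_derivative (\<lambda>a. (1 / fact l) *\<^sub>R dd ((a, 0) # replicate l (0, 1)) W (y0, 0))) (at y0)"
      by (rule has_derivative_transform_within_open[OF _ U y0])
        (simp add: smooth_expansion_coefficients[OF W d _ exp that])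
    moreover have "(y0, 0) \<in> U \<times> {-d<..<d}"
      using y0 d by simp
    ultimately show ?thesis
      using dd_Cons_eq_append[OF W] frechet_derivative_at by metis
  qed
  have "(\<Sum>l<q. e ^ l *\<^sub>R frechet_derivative (c l) (at y0) a)
      = (\<Sum>l<q. (e ^ l / fact l) *\<^sub>R dd (replicate l (0, 1) @ [(a, 0)]) W (y0, 0))" for e
    by (intro sum.cong refl) (simp add: Dc)
  then have "bigo_pow q (\<lambda>e. dd [(a, 0)] W (y0, e) - (\<Sum>l<q. e ^ l *\<^sub>R frechet_derivative (c l) (at y0) a))"
    using smooth_on_taylor_in_slice[OF W d y0, of q "[(a, 0)]"] by simp
  moreover have "eventually (\<lambda>e. dd [(a, 0)] W (y0, e) = frechet_derivative (\<lambda>y. W (y, e)) (at y0) a) (at_right 0)"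
    using eventually_at_right_real[OF d]
  proof eventually_elim
    case (elim e)
    then have "dd [] W differentiable at (y0, e)"
      using y0 d by (intro diff) auto
    from frechet_derivative_at[OF has_derivative_dd_slice[OF this], symmetric] show ?case
      by simp
  qed
  ultimately show ?thesis
    by (rule bigo_pow_cong[where g = "\<lambda>e. _ e - _ e", OF _ eventually_mono]) auto
qed

section \<open>The time derivative near the slow manifold\<close>

lemma ddt_eq_frechet_derivative:
  assumes "(\<lambda>(y, z, e). V y z e) differentiable at (y, z, e)"
  shows "ddt V g1 g2 y z e
    = frechet_derivative (\<lambda>(y, z, e). V y z e) (at (y, z, e)) (e *\<^sub>R g1 y z e, g2 y z e, 0)"
proof -
  let ?D = "frechet_derivative (\<lambda>(y, z, e). V y z e) (at (y, z, e))"
  interpret linear ?D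
    using linear_frechet_derivative[OF assms] .
  have "((\<lambda>y'. (y', z, e)) has_derivative (\<lambda>a. (a, 0, 0))) (at y)"
    "((\<lambda>z'. (y, z', e)) has_derivative (\<lambda>b. (0, b, 0))) (at z)"
    by (auto intro!: derivative_eq_intros simp: zero_prod_def)
  from frechet_derivative_chain[OF this(1), of "\<lambda>(y, z, e). V y z e"]
    frechet_derivative_chain[OF this(2), of "\<lambda>(y, z, e). V y z e"] assms
  have "frechet_derivative (\<lambda>y'. V y' z e) (at y) a = ?D (a, 0, 0)"
    "frechet_derivative (\<lambda>z'. V y z' e) (at z) b = ?D (0, b, 0)" for a b
    by simp_all
  then show ?thesis
    unfolding ddt_def by (simp flip: scale add)
qed

lemma ddt_on_slow_manifold:
  assumes "(\<lambda>(y, z, e). V y z e) differentiable at (y, h y, e)" "h differentiable at y"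
    and "g2 y (h y) e = e *\<^sub>R frechet_derivative h (at y) (g1 y (h y) e)"
  shows "ddt V g1 g2 y (h y) e = e *\<^sub>R frechet_derivative (\<lambda>y'. V y' (h y') e) (at y) (g1 y (h y) e)"
proof -
  let ?D = "frechet_derivative (\<lambda>(y, z, e). V y z e) (at (y, h y, e))"
  interpret linear ?D
    using linear_frechet_derivative[OF assms(1)] .
  have "((\<lambda>y'. (y', h y', e)) has_derivative (\<lambda>a. (a, frechet_derivative h (at y) a, 0))) (at y)"
    using has_frechet_derivative[OF assms(2)] by (auto intro!: derivative_eq_intros)
  from frechet_derivative_chain[OF this, of "\<lambda>(y, z, e). V y z e"] assms(1)
  have "frechet_derivative (\<lambda>y'. V y' (h y') e) (at y) a = ?D (a, frechet_derivative h (at y) a, 0)" for a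
    by simp
  then show ?thesis
    using assms(3) by (simp add: ddt_eq_frechet_derivative[OF assms(1)] flip: scale)
qed

lemma smooth_on_ddt:
  fixes V :: "'m::euclidean_space \<Rightarrow> 'n::euclidean_space \<Rightarrow> real \<Rightarrow> 'v::real_normed_vector"
  assumes "smooth_on UNIV (\<lambda>(y, z, e). V y z e)"
    and "smooth_on UNIV (\<lambda>(y, z, e). g1 y z e)" "smooth_on UNIV (\<lambda>(y, z, e). g2 y z e)"
  shows "smooth_on UNIV (\<lambda>(y, z, e). ddt V g1 g2 y z e)"
proof -
  define DV where "DV = (\<lambda>(x, w). frechet_derivative (\<lambda>(y, z, e). V y z e) (at x) w)"
  define G where "G x = (snd (snd x) *\<^sub>R (\<lambda>(y, z, e). g1 y z e) x, (\<lambda>(y, z, e). g2 y z e) x, 0::real)"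
    for x :: "'m \<times> 'n \<times> real"
  have "(\<lambda>(y, z, e). V y z e) differentiable at x" for x
    using assms(1) unfolding smooth_on_def by (metis dd.simps(1) UNIV_I)
  then have ddt_eq: "(\<lambda>(y, z, e). ddt V g1 g2 y z e) = (\<lambda>x. DV (x, G x))"
    by (auto simp: DV_def G_def ddt_eq_frechet_derivative)
  have "smooth_upto n UNIV (\<lambda>x. DV (x, G x))" for n
  proof (rule smooth_upto_compose[OF open_UNIV subset_UNIV])
    show "smooth_upto n UNIV DV"
      using smooth_upto_frechet_derivative[OF open_UNIV, of n "\<lambda>(y, z, e). V y z e"] assms(1)
      unfolding smooth_on_iff_smooth_upto DV_def by simp
    have "smooth_upto n UNIV (\<lambda>x::'m \<times> 'n \<times> real. snd (snd x))"
      by (intro smooth_upto_bounded_linear[OF open_UNIV] bounded_linear_compose[OF bounded_linear_snd]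
          bounded_linear_snd)
    then have "smooth_upto n UNIV G"
      using assms(2,3) unfolding G_def smooth_on_iff_smooth_upto
      by (intro smooth_upto_Pair[OF open_UNIV] smooth_upto_scaleR[OF open_UNIV] smooth_upto_const) simp_all
    then show "smooth_upto n UNIV (\<lambda>x. (x, G x))"
      by (intro smooth_upto_Pair[OF open_UNIV] smooth_upto_bounded_linear[OF open_UNIV bounded_linear_ident])
  qed
  then show ?thesis
    unfolding ddt_eq by (simp add: smooth_on_iff_smooth_upto)
qed

lemma smooth_on_compose_graph:
  fixes V :: "'m::euclidean_space \<Rightarrow> 'n::euclidean_space \<Rightarrow> real \<Rightarrow> 'v::real_normed_vector"
  assumes "smooth_on UNIV (\<lambda>(y, z, e). V y z e)" "smooth_on S (\<lambda>(y, e). h e y)"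
  shows "smooth_on S (\<lambda>(y, e). V y (h e y) e)"
proof -
  have S: "open S"
    using assms(2) by (simp add: smooth_on_def)
  have "smooth_upto n S (\<lambda>x. (\<lambda>(y, z, e). V y z e) (fst x, (\<lambda>(y, e). h e y) x, snd x))" for n
  proof (rule smooth_upto_compose[OF S subset_UNIV])
    show "smooth_upto n UNIV (\<lambda>(y, z, e). V y z e)"
      using assms(1) by (simp add: smooth_on_iff_smooth_upto)
    have "smooth_upto n S (\<lambda>(y, e). h e y)"
      using assms(2) by (simp add: smooth_on_iff_smooth_upto)
    then show "smooth_upto n S (\<lambda>x. (fst x, (\<lambda>(y, e). h e y) x, snd x))"
      by (intro smooth_upto_Pair[OF S] smooth_upto_bounded_linear[OF S bounded_linear_fst]
          smooth_upto_bounded_linear[OF S bounded_linear_snd])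
  qed
  moreover have "(\<lambda>(y, e). V y (h e y) e) = (\<lambda>x. V (fst x) ((\<lambda>(y, e). h e y) x) (snd x))"
    by (simp add: fun_eq_iff)
  ultimately show ?thesis
    using S by (simp add: smooth_on_iff_smooth_upto)
qed

lemma smooth_on_tendsto_slice:
  fixes e0 :: real
  assumes "smooth_on (U \<times> {-e0<..<e0}) (\<lambda>(y, e). h e y)" "y \<in> U" "e0 > 0"
  shows "((\<lambda>e. h e y) \<longlongrightarrow> h 0 y) (at_right 0)"
proof -
  have "isCont (\<lambda>(y, e). h e y) (y, 0)"
    using assms by (intro differentiable_imp_continuous_within smooth_on_differentiable) auto
  from isCont_tendsto_compose[OF this tendsto_Pair[OF tendsto_const tendsto_ident_at]] show ?thesis
    by simp
qed

lemma bigo_pow_compose_approximation: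
  fixes F :: "'m::euclidean_space \<Rightarrow> 'n::euclidean_space \<Rightarrow> real \<Rightarrow> 'v::real_normed_vector"
  assumes "smooth_on UNIV (\<lambda>(y, z, e). F y z e)"
    and "(z \<longlongrightarrow> z0) (at_right 0)" "bigo_pow (Suc k) (\<lambda>e. z' e - z e)"
  shows "bigo_pow (Suc k) (\<lambda>e. F y (z' e) e - F y (z e) e)"
proof -
  have "(z' \<longlongrightarrow> z0) (at_right 0)"
    using tendsto_add[OF bigo_pow_Suc_tendsto_0[OF assms(3)] assms(2)] by simp
  then have "((\<lambda>e. (y, z' e, e)) \<longlongrightarrow> (y, z0, 0)) (at_right 0)"
    by (intro tendsto_Pair tendsto_const tendsto_ident_at)
  moreover have "((\<lambda>e. (y, z e, e)) \<longlongrightarrow> (y, z0, 0)) (at_right 0)"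
    by (intro tendsto_Pair tendsto_const tendsto_ident_at assms(2))
  moreover have "bigo_pow (Suc k) (\<lambda>e. (y, z' e, e) - (y, z e, e))"
  proof -
    have "bounded_linear (\<lambda>w. (0::'m, w, 0::real))"
      by (intro bounded_linear_Pair bounded_linear_zero bounded_linear_ident)
    from bigo_pow_bounded_linear[OF this assms(3)] show ?thesis
      by simp
  qed
  moreover have "smooth_upto 1 UNIV (\<lambda>(y, z, e). F y z e)"
    using assms(1) by (simp add: smooth_on_iff_smooth_upto)
  ultimately show ?thesis
    using bigo_pow_smooth_compose_diff[OF open_UNIV _ UNIV_I] by fastforce
qed

lemma ddt_slow_manifold_expansion:
  fixes V :: "'m::euclidean_space \<Rightarrow> 'n::euclidean_space \<Rightarrow> real \<Rightarrow> 'v::real_inner"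
    and g1 :: "'m \<Rightarrow> 'n \<Rightarrow> real \<Rightarrow> 'm" and g2 :: "'m \<Rightarrow> 'n \<Rightarrow> real \<Rightarrow> 'n"
  assumes V_smooth: "smooth_on UNIV (\<lambda>(y, z, e). V y z e)"
    and h_smooth: "smooth_on (U \<times> {-e0<..<e0}) (\<lambda>(y, e). h e y)" and y0: "y0 \<in> U" and e0: "e0 > 0"
    and invariance: "\<And>e. e \<in> {0<..<e0} \<Longrightarrow>
          g2 y0 (h e y0) e = e *\<^sub>R frechet_derivative (h e) (at y0) (g1 y0 (h e y0) e)"
    and V_exp: "\<And>y. y \<in> U \<Longrightarrow> bigo_pow (Suc q) (\<lambda>e. V y (h e y) e - (\<Sum>l\<le>q. e ^ l *\<^sub>R Vl l y))"
    and g1_exp: "bigo_pow (Suc q) (\<lambda>e. g1 y0 (h e y0) e - (\<Sum>k\<le>q. e ^ k *\<^sub>R g1l k y0))"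
  shows "bigo_pow (Suc q) (\<lambda>e. ddt V g1 g2 y0 (h e y0) e
           - (\<Sum>i\<le>q. e ^ (i + 1) *\<^sub>R (\<Sum>l\<le>i. frechet_derivative (Vl l) (at y0) (g1l (i - l) y0))))"
proof -
  define W where "W = (\<lambda>(y, e). V y (h e y) e)"
  have W_smooth: "smooth_on (U \<times> {-e0<..<e0}) W"
    unfolding W_def by (rule smooth_on_compose_graph[OF V_smooth h_smooth])
  have slow: "eventually (\<lambda>e. linear (frechet_derivative (\<lambda>y. W (y, e)) (at y0)) \<and>
      ddt V g1 g2 y0 (h e y0) e = e *\<^sub>R frechet_derivative (\<lambda>y. W (y, e)) (at y0) (g1 y0 (h e y0) e))
      (at_right 0)"
    using eventually_at_right_real[OF e0]
  proof eventually_elim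
    case (elim e)
    then have "(y0, e) \<in> U \<times> {-e0<..<e0}"
      using y0 by simp
    then have "W differentiable at (y0, e)" "(\<lambda>(y, e). h e y) differentiable at (y0, e)"
      using smooth_on_differentiable W_smooth h_smooth by blast+
    then have "(\<lambda>y. W (y, e)) differentiable at y0" "h e differentiable at y0"
      using differentiable_at_slice[of W y0 e] differentiable_at_slice[of "\<lambda>(y, e). h e y" y0 e]
      by simp_all
    then show ?case
      using invariance[OF elim] smooth_on_differentiable[OF V_smooth]
      by (simp add: W_def linear_frechet_derivative ddt_on_slow_manifold)
  qed
  have "bigo_pow (Suc q) (\<lambda>e. e *\<^sub>R frechet_derivative (\<lambda>y. W (y, e)) (at y0) (g1 y0 (h e y0) e)
      - (\<Sum>i\<le>q. e ^ (i + 1) *\<^sub>R (\<Sum>l\<le>i. frechet_derivative (Vl l) (at y0) (g1l (i - l) y0))))"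
    using slow smooth_expansion_frechet_derivative[OF W_smooth y0 e0] V_exp
    by (intro bigo_pow_expansion_linear_apply[OF _ _ g1_exp]) (auto simp: W_def elim: eventually_mono)
  then show ?thesis
    by (rule bigo_pow_cong) (use slow in \<open>auto elim: eventually_mono\<close>)
qed

theorem lemmaA2:
  fixes g1 :: "real^'m \<Rightarrow> real^'n \<Rightarrow> real \<Rightarrow> real^'m"
    and g2 :: "real^'m \<Rightarrow> real^'n \<Rightarrow> real \<Rightarrow> real^'n"
    and h :: "real \<Rightarrow> real^'m \<Rightarrow> real^'n"
    and psi :: "real^'m \<Rightarrow> real \<Rightarrow> real^'n"
    and V :: "real^'m \<Rightarrow> real^'n \<Rightarrow> real \<Rightarrow> real^'c^'r"
    and Vl :: "nat \<Rightarrow> real^'m \<Rightarrow> real^'c^'r"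
    and g1l :: "nat \<Rightarrow> real^'m \<Rightarrow> real^'m"
    and U :: "(real^'m) set" and e0 :: real and q :: nat
  assumes U_open: "open U" and e0_pos: "e0 > 0"
    and g1_smooth: "smooth_on UNIV (\<lambda>(y, z, eps). g1 y z eps)"
    and g2_smooth: "smooth_on UNIV (\<lambda>(y, z, eps). g2 y z eps)"
    and h_smooth: "smooth_on (U \<times> {-e0<..<e0}) (\<lambda>(y, eps). h eps y)"
    and invariance: "\<forall>y\<in>U. \<forall>eps\<in>{0<..<e0}.
          g2 y (h eps y) eps = eps *\<^sub>R frechet_derivative (h eps) (at y) (g1 y (h eps y) eps)"
    and psi_diff: "\<forall>y\<in>U. \<forall>eps\<in>{0<..<e0}. (\<lambda>y'. psi y' eps) differentiable (at y)"
    and psi_approx: "\<forall>y\<in>U. (\<lambda>eps. norm (psi y eps - h eps y)) \<in> O[at_right 0](\<lambda>eps. eps ^ (q + 1))"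
    and Dpsi_approx: "\<forall>y\<in>U. (\<lambda>eps. onorm (\<lambda>v. frechet_derivative (\<lambda>y'. psi y' eps) (at y) v
                                             - frechet_derivative (h eps) (at y) v))
                          \<in> O[at_right 0](\<lambda>eps. eps ^ (q + 1))"
    and V_smooth: "smooth_on UNIV (\<lambda>(y, z, eps). V y z eps)"
    and V_bounded: "\<forall>y z. (\<lambda>eps. norm (V y z eps)) \<in> O[at_right 0](\<lambda>_. 1)"
    and V_exp: "\<forall>y\<in>U. (\<lambda>eps. norm (V y (psi y eps) eps - (\<Sum>l\<le>q. eps ^ l *\<^sub>R Vl l y)))
                          \<in> O[at_right 0](\<lambda>eps. eps ^ (q + 1))"
    and g1_exp: "\<forall>y\<in>U. (\<lambda>eps. norm (g1 y (psi y eps) eps - (\<Sum>l\<le>q. eps ^ l *\<^sub>R g1l l y)))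
                          \<in> O[at_right 0](\<lambda>eps. eps ^ (q + 1))"
  shows "\<forall>y\<in>U. (\<lambda>eps. norm (ddt V g1 g2 y (psi y eps) eps
              - (\<Sum>i\<le>q. eps ^ (i + 1) *\<^sub>R
                   (\<Sum>l\<le>i. frechet_derivative (Vl l) (at y) (g1l (i - l) y)))))
           \<in> O[at_right 0](\<lambda>eps. eps ^ (q + 1))"
proof
  fix y0 assume y0: "y0 \<in> U"
  have h_lim: "((\<lambda>e. h e y) \<longlongrightarrow> h 0 y) (at_right 0)" if "y \<in> U" for y
    using smooth_on_tendsto_slice[OF h_smooth that e0_pos] .
  have psi_h: "bigo_pow (Suc q) (\<lambda>e. psi y e - h e y)" if "y \<in> U" for y
    using psi_approx that by (simp add: bigo_pow_iff_landau)
  have "bigo_pow (Suc q) (\<lambda>e. ddt V g1 g2 y0 (h e y0) e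
      - (\<Sum>i\<le>q. e ^ (i + 1) *\<^sub>R (\<Sum>l\<le>i. frechet_derivative (Vl l) (at y0) (g1l (i - l) y0))))"
  proof (rule ddt_slow_manifold_expansion[OF V_smooth h_smooth y0 e0_pos])
    show "g2 y0 (h e y0) e = e *\<^sub>R frechet_derivative (h e) (at y0) (g1 y0 (h e y0) e)"
      if "e \<in> {0<..<e0}" for e
      using invariance y0 that by blast
    show "bigo_pow (Suc q) (\<lambda>e. V y (h e y) e - (\<Sum>l\<le>q. e ^ l *\<^sub>R Vl l y))" if "y \<in> U" for y
    proof -
      have "bigo_pow (Suc q) (\<lambda>e. V y (psi y e) e - (\<Sum>l\<le>q. e ^ l *\<^sub>R Vl l y))"
        using V_exp that by (simp add: bigo_pow_iff_landau)
      from bigo_pow_diff[OF this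
          bigo_pow_compose_approximation[OF V_smooth h_lim[OF that] psi_h[OF that], where y = y]]
      show ?thesis
        by simp
    qed
    show "bigo_pow (Suc q) (\<lambda>e. g1 y0 (h e y0) e - (\<Sum>k\<le>q. e ^ k *\<^sub>R g1l k y0))"
    proof -
      have "bigo_pow (Suc q) (\<lambda>e. g1 y0 (psi y0 e) e - (\<Sum>k\<le>q. e ^ k *\<^sub>R g1l k y0))"
        using g1_exp y0 by (simp add: bigo_pow_iff_landau)
      from bigo_pow_diff[OF this
          bigo_pow_compose_approximation[OF g1_smooth h_lim[OF y0] psi_h[OF y0], where y = y0]]
      show ?thesis
        by simp
    qed
  qed
  from bigo_pow_add[OF bigo_pow_compose_approximation[OF smooth_on_ddt[OF V_smooth g1_smooth g2_smooth]
        h_lim[OF y0] psi_h[OF y0], where y = y0] this]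
  show "(\<lambda>eps. norm (ddt V g1 g2 y0 (psi y0 eps) eps
      - (\<Sum>i\<le>q. eps ^ (i + 1) *\<^sub>R (\<Sum>l\<le>i. frechet_derivative (Vl l) (at y0) (g1l (i - l) y0)))))
      \<in> O[at_right 0](\<lambda>eps. eps ^ (q + 1))"
    by (simp add: bigo_pow_iff_landau)
qed

end
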